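(* Let $\mathcal{V},\mathcal{W}$ be real separable Hilbert spaces, $c_1,c_2>0$, $T\in\mathbb{N}$, let $\sigma_1,\dots,\sigma_T$ be i.i.d. uniform on $\{-1,1\}$, and for each $t\in[T]$ let $(v_t,w_t):\{-1,1\}^{t-1}\to\{v\in\mathcal{V}:\|v\|\le c_1\}\times\{w\in\mathcal{W}:\|w\|\le c_2\}$ be arbitrary maps. Then for every $q\ge1$, \[\mathbb{E}\Big[\Big\|\sum_{t=1}^T\sigma_t\,v_t(\sigma_{<t})\otimes w_t(\sigma_{<t})\Big\|_q\Big]\le c_1c_2\,T^{\max\{\frac12,\frac1q\}}.\]
   Context: $\sigma_{<t}=(\sigma_1,\dots,\sigma_{t-1})$. For $a$ in a Hilbert space $H_1$ and $b$ in a Hilbert space $H_2$, $a\otimes b:H_2\to H_1$ denotes the rank-one operator $u\mapsto\langle b,u\rangle a$. For a compact (here finite-rank) operator $F$ with singular values $(s_n)$, $\|F\|_q=(\sum_n s_n^q)^{1/q}$ is its $q$-Schatten norm. *)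

theory Defs
  imports "HOL-Analysis.Analysis" "HOL-Probability.Probability"
begin

definition rank_one :: "'v::real_inner \<Rightarrow> 'w::real_inner \<Rightarrow> 'w \<Rightarrow> 'v" where
  "rank_one a b = (\<lambda>u. inner b u *\<^sub>R a)"

definition is_svd :: "('w::real_inner \<Rightarrow> 'v::real_inner) \<Rightarrow> nat \<Rightarrow> (nat \<Rightarrow> real)
    \<Rightarrow> (nat \<Rightarrow> 'v) \<Rightarrow> (nat \<Rightarrow> 'w) \<Rightarrow> bool" where
  "is_svd F n s e f \<longleftrightarrow>
     (\<forall>i<n. s i > 0) \<and>
     (\<forall>i<n. \<forall>j<n. inner (e i) (e j) = (if i = j then 1 else 0)) \<and>
     (\<forall>i<n. \<forall>j<n. inner (f i) (f j) = (if i = j then 1 else 0)) \<and>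
     F = (\<lambda>u. \<Sum>i<n. s i *\<^sub>R rank_one (e i) (f i) u)"

definition schatten_norm :: "real \<Rightarrow> ('w::real_inner \<Rightarrow> 'v::real_inner) \<Rightarrow> real" where
  "schatten_norm q F =
     (SOME r. \<exists>n s e f. is_svd F n s e f \<and> r = (\<Sum>i<n. s i powr q) powr (1 / q))"

text \<open>Sign sequences of length T: the uniform distribution on this set is the law of
  T i.i.d. Rademacher variables.\<close>
definition sign_seqs :: "nat \<Rightarrow> real list set" where
  "sign_seqs T = {\<sigma>. length \<sigma> = T \<and> set \<sigma> \<subseteq> {-1, 1}}"

end

theory Submission
  imports Defs
begin

text \<open>
  Write F(\<sigma>) = \<Sum>_t \<sigma>_t v_t \<otimes> w_t. Every finite-rank operator has a singular value
  decomposition, obtained by maximising \<parallel>F u\<parallel> over the unit sphere of a finite-dimensional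
  span and splitting off the maximiser; for any representation F = \<Sum>_k a_k \<otimes> b_k the squared
  singular values sum to \<Sum>_{k,l} \<langle>a_k, a_l\<rangle> \<langle>b_k, b_l\<rangle>, the squared Hilbert-Schmidt norm
  \<parallel>F\<parallel>_2^2. As F(\<sigma>) has rank at most T, comparing the l^q and l^2 norms of its singular values
  gives \<parallel>F(\<sigma>)\<parallel>_q \<le> T^max(0, 1/q - 1/2) \<parallel>F(\<sigma>)\<parallel>_2. In the mean of \<parallel>F(\<sigma>)\<parallel>_2^2 the terms with
  t \<noteq> t' cancel, because the later of \<sigma>_t, \<sigma>_t' is a fair sign independent of the rest of the
  term, so E \<parallel>F(\<sigma>)\<parallel>_2^2 \<le> T c1^2 c2^2, and Jensen's inequality for the square root finishes
  the proof. Only finite-dimensional spans occur.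
\<close>

section \<open>Orthonormal sets\<close>

definition orthonormal :: "'a::real_inner set \<Rightarrow> bool" where
  "orthonormal B \<longleftrightarrow> pairwise orthogonal B \<and> (\<forall>x\<in>B. norm x = 1)"

definition orth_proj :: "'a::real_inner set \<Rightarrow> 'a \<Rightarrow> 'a" where
  "orth_proj B u = (\<Sum>x\<in>B. inner x u *\<^sub>R x)"

lemma orthonormal_inner:
  "orthonormal B \<Longrightarrow> x \<in> B \<Longrightarrow> y \<in> B \<Longrightarrow> inner x y = (if x = y then 1 else 0)"
  unfolding orthonormal_def pairwise_def orthogonal_def by (auto simp: norm_eq_1)

lemma orthonormal_independent: "orthonormal B \<Longrightarrow> independent B"
  unfolding orthonormal_def by (metis norm_zero pairwise_orthogonal_independent zero_neq_one)

lemma orthonormal_insert: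
  assumes "orthonormal B" "norm y = 1" "\<And>x. x \<in> B \<Longrightarrow> inner x y = 0"
  shows "orthonormal (insert y B)"
  using assms unfolding orthonormal_def
  by (auto simp: pairwise_orthogonal_insert orthogonal_def inner_commute)

lemma orth_proj_in_span: "orth_proj B u \<in> span B"
  unfolding orth_proj_def by (intro span_sum span_mul span_base)

lemma inner_orth_proj:
  assumes "finite B" "orthonormal B" "x \<in> B"
  shows "inner x (orth_proj B u) = inner x u"
proof -
  have "inner x (orth_proj B u) = (\<Sum>y\<in>B. if y = x then inner x u else 0)"
    unfolding orth_proj_def inner_sum_right
    using assms(2,3) by (intro sum.cong) (auto simp: orthonormal_inner)
  then show ?thesis using assms(1,3) by simp
qed

lemma inner_orth_proj_residual:
  assumes "finite B" "orthonormal B" "y \<in> span B"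
  shows "inner y (u - orth_proj B u) = 0"
proof -
  have "orthogonal (u - orth_proj B u) y"
    by (rule orthogonal_to_span[OF assms(3)])
       (simp add: orthogonal_def inner_diff_right inner_commute inner_orth_proj[OF assms(1,2)])
  then show ?thesis by (simp add: orthogonal_def inner_commute)
qed

lemma orth_proj_eq_self:
  assumes "finite B" "orthonormal B" "u \<in> span B"
  shows "orth_proj B u = u"
proof -
  have "u - orth_proj B u \<in> span B"
    by (intro span_diff assms(3) orth_proj_in_span)
  from inner_orth_proj_residual[OF assms(1,2) this, of u] show ?thesis by simp
qed

lemma inner_eq_0_on_span:
  assumes "y \<in> span B" "\<And>x. x \<in> B \<Longrightarrow> inner x u = 0"
  shows "inner y u = 0"
  using orthogonal_to_span[OF assms(1), of u] assms(2)
  by (simp add: orthogonal_def inner_commute)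

lemma gram_schmidt_step:
  assumes "finite B" "orthonormal B" "x \<notin> span B"
  obtains y where "orthonormal (insert y B)" "span (insert y B) = span (insert x B)"
proof -
  define r where "r = x - orth_proj B x"
  have "r \<noteq> 0" using assms(3) orth_proj_in_span[of B x] by (auto simp: r_def)
  define y where "y = r /\<^sub>R norm r"
  have "inner z y = 0" if "z \<in> B" for z
    using inner_orth_proj_residual[OF assms(1,2) span_base[OF that], of x]
    by (simp add: y_def r_def)
  then have "orthonormal (insert y B)"
    using \<open>r \<noteq> 0\<close> by (intro orthonormal_insert assms(2)) (simp_all add: y_def)
  moreover have "span (insert y B) = span (insert x B)"
  proof -
    have proj: "orth_proj B x \<in> span (insert z B)" for z
      using orth_proj_in_span span_mono[of B "insert z B"] by blast
    have "x = norm r *\<^sub>R y + orth_proj B x"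
      using \<open>r \<noteq> 0\<close> by (simp add: y_def r_def)
    moreover have "y \<in> span (insert y B)" by (simp add: span_base)
    ultimately have "x \<in> span (insert y B)"
      using proj[of y] by (metis span_add span_mul)
    moreover have "x \<in> span (insert x B)" by (simp add: span_base)
    then have "y \<in> span (insert x B)"
      unfolding y_def r_def using proj[of x] by (intro span_mul span_diff)
    ultimately show ?thesis
      unfolding span_eq by (auto intro: span_base)
  qed
  ultimately show thesis by (rule that)
qed

lemma orthonormal_extension:
  fixes B :: "'a::real_inner set"
  assumes "finite S" "finite B" "orthonormal B"
  shows "\<exists>B'. finite B' \<and> orthonormal B' \<and> B \<subseteq> B' \<and> span B' = span (B \<union> S)"
  using assms
proof (induction S arbitrary: B rule: finite_induct)
  case empty
  show ?case by (intro exI[of _ B]) (simp add: empty)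
next
  case (insert x S)
  show ?case
  proof (cases "x \<in> span B")
    case True
    then have "x \<in> span (B \<union> S)"
      using span_mono[of B "B \<union> S"] by blast
    then have "span (B \<union> insert x S) = span (B \<union> S)"
      by (simp add: span_redundant)
    with insert.IH[OF insert.prems] show ?thesis by simp
  next
    case False
    obtain y where y: "orthonormal (insert y B)" "span (insert y B) = span (insert x B)"
      using gram_schmidt_step[OF insert.prems False] .
    then obtain B' where "finite B'" "orthonormal B'" "insert y B \<subseteq> B'"
        "span B' = span (insert y B \<union> S)"
      using insert.IH[of "insert y B"] insert.prems(1) by auto
    moreover have "span (insert y B \<union> S) = span (insert x B \<union> S)"
      by (simp only: span_Un y(2))
    ultimately show ?thesis by (intro exI[of _ B']) auto
  qed
qed

lemma orthonormal_basis_through: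
  assumes "finite B" "f \<in> span B" "norm f = 1"
  obtains E where "finite E" "orthonormal (insert f E)" "f \<notin> E"
    "span (insert f E) = span B" "card E < card B"
proof -
  have "orthonormal {f}" using assms(3) by (simp add: orthonormal_def)
  then obtain B' where B': "finite B'" "orthonormal B'" "f \<in> B'" "span B' = span (insert f B)"
    using orthonormal_extension[where B="{f}" and S=B] assms(1) by auto
  have span_B': "span B' = span B"
    using B'(4) assms(2) by (simp add: span_redundant)
  have "card B' \<le> card B"
    using independent_span_bound[OF assms(1) orthonormal_independent[OF B'(2)]]
      span_B' span_superset[of B'] by simp
  moreover have "card (B' - {f}) = card B' - 1" "card B' > 0"
    using B'(1,3) by (auto simp: card_gt_0_iff)
  ultimately have "card (B' - {f}) < card B" by linarith
  moreover have "insert f (B' - {f}) = B'" using B'(3) by blast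
  ultimately show thesis
    using that[of "B' - {f}"] B'(1,2) span_B' by simp
qed

lemma compact_bounded_combinations:
  fixes B :: "'a::real_normed_vector set"
  assumes "finite B"
  shows "compact {\<Sum>x\<in>B. c x *\<^sub>R x | c. \<forall>x. \<bar>c x\<bar> \<le> 1}"
  using assms
proof (induction rule: finite_induct)
  case empty
  have "{\<Sum>x\<in>{}. c x *\<^sub>R x | c. \<forall>x. \<bar>c x\<bar> \<le> (1::real)} = {0::'a}"
    by (auto intro: exI[of _ "\<lambda>_. 0"])
  then show ?case by simp
next
  case (insert a B)
  let ?K = "\<lambda>B. {\<Sum>x\<in>B. c x *\<^sub>R x | c. \<forall>x. \<bar>c x\<bar> \<le> 1}"
  have "?K (insert a B) = (\<lambda>(z, t). z + t *\<^sub>R a) ` (?K B \<times> {-1..1})"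
  proof (intro equalityI subsetI)
    fix y assume "y \<in> ?K (insert a B)"
    then obtain c where "y = c a *\<^sub>R a + (\<Sum>x\<in>B. c x *\<^sub>R x)" "\<forall>x. \<bar>c x\<bar> \<le> 1"
      using insert.hyps by auto
    then show "y \<in> (\<lambda>(z, t). z + t *\<^sub>R a) ` (?K B \<times> {-1..1})"
      by (intro image_eqI[of _ _ "(\<Sum>x\<in>B. c x *\<^sub>R x, c a)"]) (auto simp: abs_le_iff)
  next
    fix y assume "y \<in> (\<lambda>(z, t). z + t *\<^sub>R a) ` (?K B \<times> {-1..1})"
    then obtain c t where y: "y = (\<Sum>x\<in>B. c x *\<^sub>R x) + t *\<^sub>R a"
      and c: "\<forall>x. \<bar>c x\<bar> \<le> 1" and t: "t \<in> {-1..1}"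
      by auto
    have "(\<Sum>x\<in>B. (c(a := t)) x *\<^sub>R x) = (\<Sum>x\<in>B. c x *\<^sub>R x)"
      using insert.hyps(2) by (intro sum.cong) auto
    then have "y = (\<Sum>x\<in>insert a B. (c(a := t)) x *\<^sub>R x)"
      using insert.hyps y by simp
    moreover have "\<forall>x. \<bar>(c(a := t)) x\<bar> \<le> 1" using c t by auto
    ultimately show "y \<in> ?K (insert a B)" by blast
  qed
  moreover have "compact ((\<lambda>(z, t). z + t *\<^sub>R a) ` (?K B \<times> {-1..1}))"
    by (intro compact_continuous_image compact_Times insert.IH compact_Icc)
       (auto intro!: continuous_intros simp: case_prod_unfold)
  ultimately show ?case by simp
qed

lemma compact_unit_sphere_span:
  assumes "finite B" "orthonormal B"
  shows "compact {u \<in> span B. norm u = 1}"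
proof -
  let ?K = "{\<Sum>x\<in>B. c x *\<^sub>R x | c. \<forall>x. \<bar>c x\<bar> \<le> 1}"
  have "{u \<in> span B. norm u = 1} = ?K \<inter> {u. norm u = 1}"
  proof (intro equalityI subsetI)
    fix u assume u: "u \<in> {u \<in> span B. norm u = 1}"
    define c where "c x = (if x \<in> B then inner x u else 0)" for x
    have "u = (\<Sum>x\<in>B. c x *\<^sub>R x)"
      using orth_proj_eq_self[OF assms, of u] u by (simp add: orth_proj_def c_def)
    moreover have "\<bar>c x\<bar> \<le> 1" for x
      using Cauchy_Schwarz_ineq2[of x u] u assms(2) by (auto simp: c_def orthonormal_def)
    ultimately show "u \<in> ?K \<inter> {u. norm u = 1}" using u by blast
  next
    fix u assume "u \<in> ?K \<inter> {u. norm u = 1}"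
    then obtain c where "u = (\<Sum>x\<in>B. c x *\<^sub>R x)" "norm u = 1" by blast
    moreover have "(\<Sum>x\<in>B. c x *\<^sub>R x) \<in> span B" by (intro span_sum span_mul span_base)
    ultimately show "u \<in> {u \<in> span B. norm u = 1}" by simp
  qed
  moreover have "compact (?K \<inter> {u. norm u = 1})"
    by (intro compact_Int_closed compact_bounded_combinations assms(1) closed_Collect_eq
        continuous_intros)
  ultimately show ?thesis by simp
qed

section \<open>Singular value decomposition of finite-rank operators\<close>

lemma linear_coefficient_eq_0:
  fixes a b :: real
  assumes "\<And>t. t * a + t\<^sup>2 * b \<le> 0"
  shows "a = 0"
proof (rule ccontr)
  assume "a \<noteq> 0"
  define c where "c = \<bar>b\<bar> + 1"
  define t where "t = a / (2 * c)"
  have "c > 0" by (simp add: c_def)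
  have "t * a - t\<^sup>2 * c = a\<^sup>2 / (4 * c)"
    using \<open>c > 0\<close> by (simp add: t_def field_simps power2_eq_square)
  also have "\<dots> > 0" using \<open>a \<noteq> 0\<close> \<open>c > 0\<close> by simp
  also have "t * a - t\<^sup>2 * c \<le> t * a + t\<^sup>2 * b"
    by (smt (verit, best) c_def mult_left_mono zero_le_power2 distrib_left mult.commute)
  finally show False using assms[of t] by simp
qed

text \<open>First-order condition for f maximising \<parallel>F y\<parallel> / \<parallel>y\<parallel> on V: for u' orthogonal to f the
  quadratic t \<mapsto> \<parallel>F (f + t u')\<parallel>^2 - \<parallel>F f\<parallel>^2 \<parallel>f + t u'\<parallel>^2 is nonpositive and vanishes at 0, so
  its linear coefficient is zero.\<close>

lemma inner_image_of_norm_maximizer: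
  fixes F :: "'a::real_inner \<Rightarrow> 'b::real_inner"
  assumes "linear F" "subspace V" "f \<in> V" "norm f = 1"
    and max: "\<And>y. y \<in> V \<Longrightarrow> norm (F y) \<le> norm (F f) * norm y"
    and "u \<in> V"
  shows "inner (F f) (F u) = (norm (F f))\<^sup>2 * inner f u"
proof -
  interpret F: linear F by fact
  define s where "s = norm (F f)"
  define u' where "u' = u - inner f u *\<^sub>R f"
  have u'V: "u' \<in> V"
    using assms(2,3,6) by (simp add: u'_def subspace_diff subspace_scale)
  have fu': "inner f u' = 0"
    using assms(4) by (simp add: u'_def inner_diff_right norm_eq_1)
  have "2 * inner (F f) (F u') = 0"
  proof (rule linear_coefficient_eq_0)
    fix t :: real
    have "f + t *\<^sub>R u' \<in> V"
      using assms(2,3) u'V by (simp add: subspace_add subspace_scale)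
    then have "(norm (F (f + t *\<^sub>R u')))\<^sup>2 \<le> (s * norm (f + t *\<^sub>R u'))\<^sup>2"
      using max by (simp add: s_def power_mono)
    moreover have "(norm (f + t *\<^sub>R u'))\<^sup>2 = 1 + t\<^sup>2 * (norm u')\<^sup>2"
      using fu' assms(4) unfolding power2_norm_eq_inner
      by (simp add: inner_add inner_commute norm_eq_1 power2_eq_square algebra_simps)
    moreover have "(norm (F (f + t *\<^sub>R u')))\<^sup>2
        = s\<^sup>2 + t * (2 * inner (F f) (F u')) + t\<^sup>2 * (norm (F u'))\<^sup>2"
      unfolding s_def power2_norm_eq_inner F.add F.scale
      by (simp add: inner_add inner_commute power2_eq_square algebra_simps)
    ultimately show "t * (2 * inner (F f) (F u')) + t\<^sup>2 * ((norm (F u'))\<^sup>2 - s\<^sup>2 * (norm u')\<^sup>2) \<le> 0"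
      by (simp add: power_mult_distrib algebra_simps)
  qed
  moreover have "F u = inner f u *\<^sub>R F f + F u'"
    by (simp add: u'_def F.diff F.scale)
  ultimately show ?thesis
    by (simp add: inner_add_right power2_norm_eq_inner)
qed

lemma apply_eq_apply_orth_proj:
  assumes "finite B" "orthonormal B" "linear F"
    and "\<And>u. \<forall>x\<in>B. inner x u = 0 \<Longrightarrow> F u = 0"
  shows "F u = F (orth_proj B u)"
proof -
  have "F (u - orth_proj B u) = 0"
    using assms(4) inner_orth_proj_residual[OF assms(1,2) span_base] by blast
  then show ?thesis by (simp add: linear_diff[OF assms(3)])
qed

lemma norm_maximizer_on_span:
  fixes F :: "'a::real_inner \<Rightarrow> 'b::real_normed_vector"
  assumes "finite B" "orthonormal B" "bounded_linear F" "B \<noteq> {}"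
  obtains f where "f \<in> span B" "norm f = 1"
    "\<And>y. y \<in> span B \<Longrightarrow> norm (F y) \<le> norm (F f) * norm y"
proof -
  interpret F: bounded_linear F by fact
  let ?S = "{u \<in> span B. norm u = 1}"
  obtain x where "x \<in> B" using assms(4) by blast
  then have "x \<in> ?S" using assms(2) by (simp add: span_base orthonormal_def)
  moreover have "continuous_on ?S (\<lambda>u. norm (F u))"
    by (intro continuous_on_norm linear_continuous_on assms(3))
  ultimately obtain f where f: "f \<in> ?S" and max: "\<And>y. y \<in> ?S \<Longrightarrow> norm (F y) \<le> norm (F f)"
    using continuous_attains_sup[OF compact_unit_sphere_span[OF assms(1,2)]] by blast
  have "norm (F y) \<le> norm (F f) * norm y" if "y \<in> span B" for y
  proof (cases "y = 0")
    case False
    then have "norm (F (y /\<^sub>R norm y)) \<le> norm (F f)"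
      using that max[of "y /\<^sub>R norm y"] by (simp add: span_mul)
    with False show ?thesis by (simp add: F.scaleR field_simps)
  qed (simp add: F.zero)
  with f that show thesis by blast
qed

lemma top_singular_pair:
  fixes F :: "'w::real_inner \<Rightarrow> 'v::real_inner"
  assumes "finite B" "orthonormal B" "bounded_linear F"
    and vanish: "\<And>u. \<forall>x\<in>B. inner x u = 0 \<Longrightarrow> F u = 0" and "F u0 \<noteq> 0"
  obtains s e f where "s > 0" "norm e = 1" "norm f = 1" "f \<in> span B" "F f = s *\<^sub>R e"
    "\<And>u. inner e (F u) = s * inner f u"
proof -
  interpret F: bounded_linear F by fact
  have proj: "F u = F (orth_proj B u)" for u
    by (rule apply_eq_apply_orth_proj[OF assms(1,2) F.linear vanish])
  then have "F (orth_proj B u0) \<noteq> 0" using assms(5) by simp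
  moreover have "B \<noteq> {}" using calculation by (auto simp: orth_proj_def F.zero)
  then obtain f where f: "f \<in> span B" "norm f = 1"
    and bound: "\<And>y. y \<in> span B \<Longrightarrow> norm (F y) \<le> norm (F f) * norm y"
    using norm_maximizer_on_span[OF assms(1-3)] by blast
  define s where "s = norm (F f)"
  ultimately have "s > 0"
    using bound[OF orth_proj_in_span, of u0] unfolding s_def
    by (smt (verit) mult_nonpos_nonneg norm_ge_zero zero_less_norm_iff)
  define e where "e = F f /\<^sub>R s"
  have "inner e (F u) = s * inner f u" for u
  proof -
    have "inner f (orth_proj B u) = inner f u"
      using inner_orth_proj_residual[OF assms(1,2) f(1), of u] by (simp add: inner_diff_right)
    moreover have "inner (F f) (F (orth_proj B u)) = s\<^sup>2 * inner f (orth_proj B u)"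
      unfolding s_def
      by (rule inner_image_of_norm_maximizer[OF F.linear subspace_span f bound orth_proj_in_span])
    ultimately show ?thesis
      using \<open>s > 0\<close> proj[of u] by (simp add: e_def power2_eq_square)
  qed
  moreover have "norm e = 1" "F f = s *\<^sub>R e"
    using \<open>s > 0\<close> by (simp_all add: e_def s_def)
  ultimately show thesis
    using that \<open>s > 0\<close> f by blast
qed

lemma bounded_linear_rank_one: "bounded_linear (rank_one e f)"
  unfolding rank_one_def
  by (rule bounded_linear_compose[OF bounded_linear_scaleR_left bounded_linear_inner_right])

lemma is_svd_apply:
  assumes "is_svd F n s e f" "j < n"
  shows "F (f j) = s j *\<^sub>R e j"
proof -
  have "F (f j) = (\<Sum>i<n. s i *\<^sub>R rank_one (e i) (f i) (f j))"
    using assms(1) by (simp add: is_svd_def)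
  also have "\<dots> = (\<Sum>i<n. if i = j then s j *\<^sub>R e j else 0)"
    using assms unfolding is_svd_def rank_one_def by (intro sum.cong) auto
  finally show ?thesis using assms(2) by simp
qed

lemma is_svd_Suc:
  assumes svd: "is_svd F n s e f" and "s0 > 0" "norm e0 = 1" "norm f0 = 1"
    and range_orth: "\<And>u. inner e0 (F u) = 0" and "\<And>j. j < n \<Longrightarrow> inner f0 (f j) = 0"
  shows "is_svd (\<lambda>u. s0 *\<^sub>R rank_one e0 f0 u + F u) (Suc n)
           (case_nat s0 s) (case_nat e0 e) (case_nat f0 f)"
  unfolding is_svd_def
proof (intro conjI allI impI)
  fix i assume "i < Suc n"
  then show "case_nat s0 s i > 0" using svd \<open>s0 > 0\<close> by (cases i) (auto simp: is_svd_def)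
next
  fix i j assume "i < Suc n" "j < Suc n"
  moreover have "inner e0 (e k) = 0" if "k < n" for k
    using range_orth[of "f k"] is_svd_apply[OF svd that] svd that by (auto simp: is_svd_def)
  ultimately show "inner (case_nat e0 e i) (case_nat e0 e j) = (if i = j then 1 else 0)"
    and "inner (case_nat f0 f i) (case_nat f0 f j) = (if i = j then 1 else 0)"
    using svd assms(3,4,6) by (cases i; cases j; auto simp: is_svd_def norm_eq_1 inner_commute)+
next
  show "(\<lambda>u. s0 *\<^sub>R rank_one e0 f0 u + F u)
      = (\<lambda>u. \<Sum>i<Suc n. case_nat s0 s i *\<^sub>R rank_one (case_nat e0 e i) (case_nat f0 f i) u)"
    using svd unfolding is_svd_def sum.lessThan_Suc_shift by simp
qed

lemma deflation_eq_rank_one: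
  assumes "finite B" "orthonormal B" "f \<in> B" "linear F" "F f = s *\<^sub>R e"
    and vanish: "\<And>u. \<forall>x\<in>B. inner x u = 0 \<Longrightarrow> F u = 0"
    and u: "\<forall>x\<in>B - {f}. inner x u = 0"
  shows "F u = s *\<^sub>R rank_one e f u"
proof -
  have "F u = F (orth_proj B u)"
    by (rule apply_eq_apply_orth_proj[OF assms(1,2,4) vanish])
  also have "orth_proj B u = inner f u *\<^sub>R f + orth_proj (B - {f}) u"
    unfolding orth_proj_def using assms(1,3) by (simp add: sum.remove)
  also have "orth_proj (B - {f}) u = 0"
    using u by (simp add: orth_proj_def)
  finally show ?thesis
    using assms(5) by (simp add: linear_scale[OF assms(4)] rank_one_def)
qed

lemma svd_exists_on_span:
  fixes F :: "'w::real_inner \<Rightarrow> 'v::real_inner"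
  assumes "finite B" "orthonormal B" "bounded_linear F"
    and "\<And>u. \<forall>x\<in>B. inner x u = 0 \<Longrightarrow> F u = 0"
  shows "\<exists>n s e f. is_svd F n s e f \<and> (\<forall>i<n. f i \<in> span B)"
  using assms
proof (induction "card B" arbitrary: B F rule: less_induct)
  case less
  show ?case
  proof (cases "\<forall>u. F u = 0")
    case True
    then have "is_svd F 0 s e f" for s e f by (auto simp: is_svd_def)
    then show ?thesis by blast
  next
    case False
    then obtain u0 where "F u0 \<noteq> 0" by blast
    then obtain s e f where s: "s > 0" and e: "norm e = 1" and f: "norm f = 1" "f \<in> span B"
      and Ff: "F f = s *\<^sub>R e" and adj: "\<And>u. inner e (F u) = s * inner f u"
      using top_singular_pair[OF less.prems] by blast
    obtain E where E: "finite E" "orthonormal (insert f E)" "f \<notin> E"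
      "span (insert f E) = span B" "card E < card B"
      using orthonormal_basis_through[OF less.prems(1) f(2,1)] by blast
    have vanish_fE: "F u = 0" if "\<forall>x\<in>insert f E. inner x u = 0" for u
      using less.prems(4) inner_eq_0_on_span[of _ "insert f E" u] that E(4) span_base by blast
    define F' where "F' u = F u - s *\<^sub>R rank_one e f u" for u
    have "bounded_linear F'"
      unfolding F'_def[abs_def]
      by (intro bounded_linear_sub less.prems(3) bounded_linear_const_scaleR bounded_linear_rank_one)
    moreover have "F' u = 0" if "\<forall>x\<in>E. inner x u = 0" for u
      using deflation_eq_rank_one[OF _ E(2) _ bounded_linear.linear[OF less.prems(3)] Ff vanish_fE]
        that E(1,3) by (simp add: F'_def)
    moreover have "orthonormal E"
      using E(2) by (auto simp: orthonormal_def intro: pairwise_subset)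
    ultimately obtain n s' e' f' where svd: "is_svd F' n s' e' f'" and f': "\<forall>i<n. f' i \<in> span E"
      using less.hyps[OF E(5) E(1)] by blast
    have "inner e (F' u) = 0" for u
      using e by (simp add: F'_def adj inner_diff_right rank_one_def norm_eq_1)
    moreover have "inner f (f' j) = 0" if "j < n" for j
    proof -
      have "inner x f = 0" if "x \<in> E" for x
        using orthonormal_inner[OF E(2), of x f] that E(3) by auto
      from inner_eq_0_on_span[OF f'[rule_format, OF \<open>j < n\<close>] this] show ?thesis
        by (simp add: inner_commute)
    qed
    ultimately have "is_svd (\<lambda>u. s *\<^sub>R rank_one e f u + F' u) (Suc n)
        (case_nat s s') (case_nat e e') (case_nat f f')"
      by (intro is_svd_Suc svd s e f(1))
    moreover have "(\<lambda>u. s *\<^sub>R rank_one e f u + F' u) = F" by (simp add: F'_def)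
    moreover have "\<forall>i<Suc n. case_nat f f' i \<in> span B"
      using f(2) f' span_mono[of E "insert f E"] E(4) by (auto split: nat.split)
    ultimately show ?thesis by metis
  qed
qed

lemma svd_exists_rank_one_sum:
  fixes a :: "'i \<Rightarrow> 'v::real_inner" and b :: "'i \<Rightarrow> 'w::real_inner"
  assumes "finite I"
  shows "\<exists>n s e f. is_svd (\<lambda>u. \<Sum>t\<in>I. rank_one (a t) (b t) u) n s e f"
proof -
  obtain B where B: "finite B" "orthonormal B" "span B = span (b ` I)"
    using orthonormal_extension[where B="{}" and S="b ` I"] assms by (auto simp: orthonormal_def)
  have "(\<Sum>t\<in>I. rank_one (a t) (b t) u) = 0" if "\<forall>x\<in>B. inner x u = 0" for u
  proof -
    have "inner (b t) u = 0" if "t \<in> I" for t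
      using inner_eq_0_on_span[of "b t" B u] that B(3) span_base[of "b t" "b ` I"] \<open>\<forall>x\<in>B. _\<close>
      by auto
    then show ?thesis by (simp add: rank_one_def)
  qed
  moreover have "bounded_linear (\<lambda>u. \<Sum>t\<in>I. rank_one (a t) (b t) u)"
    by (intro bounded_linear_sum bounded_linear_rank_one)
  ultimately show ?thesis
    using svd_exists_on_span[OF B(1,2)] by blast
qed

section \<open>Schatten norms of sums of rank-one operators\<close>

definition hs_norm_sq :: "'i set \<Rightarrow> ('i \<Rightarrow> 'v::real_inner) \<Rightarrow> ('i \<Rightarrow> 'w::real_inner) \<Rightarrow> real" where
  "hs_norm_sq I a b = (\<Sum>k\<in>I. \<Sum>l\<in>I. inner (a k) (a l) * inner (b k) (b l))"

lemma hs_norm_sq_eq_mixed_sum: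
  assumes "\<And>u. (\<Sum>k\<in>I. rank_one (a k) (b k) u) = (\<Sum>j\<in>J. rank_one (c j) (d j) u)"
  shows "hs_norm_sq I a b = (\<Sum>k\<in>I. \<Sum>j\<in>J. inner (d j) (b k) * inner (a k) (c j))"
proof -
  have "hs_norm_sq I a b = (\<Sum>k\<in>I. inner (a k) (\<Sum>l\<in>I. rank_one (a l) (b l) (b k)))"
    by (simp add: hs_norm_sq_def rank_one_def inner_sum_right inner_commute mult.commute)
  also have "\<dots> = (\<Sum>k\<in>I. inner (a k) (\<Sum>j\<in>J. rank_one (c j) (d j) (b k)))"
    by (simp only: assms)
  also have "\<dots> = (\<Sum>k\<in>I. \<Sum>j\<in>J. inner (d j) (b k) * inner (a k) (c j))"
    by (simp add: rank_one_def inner_sum_right)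
  finally show ?thesis .
qed

lemma hs_norm_sq_unique:
  assumes "\<And>u. (\<Sum>k\<in>I. rank_one (a k) (b k) u) = (\<Sum>j\<in>J. rank_one (c j) (d j) u)"
  shows "hs_norm_sq I a b = hs_norm_sq J c d"
  unfolding hs_norm_sq_eq_mixed_sum[OF assms] hs_norm_sq_eq_mixed_sum[OF assms[symmetric]]
  by (subst sum.swap) (simp add: inner_commute)

lemma sum_sq_singular_values:
  assumes svd: "is_svd (\<lambda>u. \<Sum>t\<in>I. rank_one (a t) (b t) u) n s e f"
  shows "(\<Sum>i<n. (s i)\<^sup>2) = hs_norm_sq I a b"
proof -
  have e: "\<forall>i<n. \<forall>j<n. inner (e i) (e j) = (if i = j then 1 else 0)"
    and f: "\<forall>i<n. \<forall>j<n. inner (f i) (f j) = (if i = j then 1 else 0)"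
    using svd by (auto simp: is_svd_def)
  have "(\<Sum>t\<in>I. rank_one (a t) (b t) u) = (\<Sum>i<n. rank_one (s i *\<^sub>R e i) (f i) u)" for u
    using svd by (simp add: is_svd_def rank_one_def fun_eq_iff mult.commute)
  then have "hs_norm_sq I a b = hs_norm_sq {..<n} (\<lambda>i. s i *\<^sub>R e i) f"
    by (rule hs_norm_sq_unique)
  also have "\<dots> = (\<Sum>i<n. \<Sum>j<n. if j = i then (s i)\<^sup>2 else 0)"
    unfolding hs_norm_sq_def using e f by (intro sum.cong refl) (auto simp: power2_eq_square)
  finally show ?thesis by simp
qed

lemma hs_norm_sq_nonneg:
  assumes "finite I"
  shows "hs_norm_sq I a b \<ge> 0"
proof -
  obtain n s e f where "is_svd (\<lambda>u. \<Sum>t\<in>I. rank_one (a t) (b t) u) n s e f"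
    using svd_exists_rank_one_sum[OF assms] by blast
  from sum_sq_singular_values[OF this] show ?thesis
    by (metis sum_nonneg zero_le_power2)
qed

lemma svd_length_le_card:
  assumes svd: "is_svd (\<lambda>u. \<Sum>t\<in>I. rank_one (a t) (b t) u) n s e f" and "finite I"
  shows "n \<le> card I"
proof -
  have e: "\<forall>i<n. \<forall>j<n. inner (e i) (e j) = (if i = j then 1 else 0)" and s: "\<forall>i<n. s i > 0"
    using svd by (auto simp: is_svd_def)
  have "e j \<in> span (a ` I)" if "j < n" for j
  proof -
    have "(1 / s j) *\<^sub>R (\<Sum>t\<in>I. rank_one (a t) (b t) (f j)) \<in> span (a ` I)"
      unfolding rank_one_def by (intro span_mul span_sum span_base) auto
    moreover have "s j \<noteq> 0" using s that by auto
    ultimately show ?thesis using is_svd_apply[OF svd that] by simp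
  qed
  moreover have "orthonormal (e ` {..<n})"
    using e by (auto simp: orthonormal_def pairwise_def orthogonal_def norm_eq_1)
  ultimately have "card (e ` {..<n}) \<le> card (a ` I)"
    using independent_span_bound[OF _ orthonormal_independent] assms(2) by blast
  moreover have "inj_on e {..<n}"
  proof (rule inj_onI)
    fix i j assume "i \<in> {..<n}" "j \<in> {..<n}" "e i = e j"
    then show "i = j" using e by (metis lessThan_iff zero_neq_one)
  qed
  ultimately show ?thesis
    using card_image_le[OF assms(2), of a] card_image[of e "{..<n}"] by simp
qed

lemma sum_powr_le_powr_sum:
  fixes x :: "'i \<Rightarrow> real"
  assumes "finite A" "\<And>i. i \<in> A \<Longrightarrow> x i \<ge> 0" "p \<ge> 1"
  shows "(\<Sum>i\<in>A. x i powr p) \<le> (\<Sum>i\<in>A. x i) powr p"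
proof -
  define S where "S = (\<Sum>i\<in>A. x i)"
  show ?thesis
  proof (cases "S = 0")
    case True
    then have "x i = 0" if "i \<in> A" for i
      using assms(1,2) that by (simp add: S_def sum_nonneg_eq_0_iff)
    then show ?thesis by simp
  next
    case False
    then have "S > 0" using assms(2) by (simp add: S_def order_less_le sum_nonneg)
    have "(\<Sum>i\<in>A. x i powr p) = S powr p * (\<Sum>i\<in>A. (x i / S) powr p)"
      using \<open>S > 0\<close> assms(2) by (simp add: powr_divide sum_distrib_left)
    also have "\<dots> \<le> S powr p * (\<Sum>i\<in>A. x i / S)"
    proof (intro mult_left_mono sum_mono)
      fix i assume "i \<in> A"
      then have "x i \<le> S"
        using assms(1,2) by (auto simp: S_def intro: member_le_sum)
      show "(x i / S) powr p \<le> x i / S"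
      proof (cases "x i = 0")
        case False
        then have "x i > 0" using assms(2) \<open>i \<in> A\<close> by (simp add: order_less_le)
        then show ?thesis
          using \<open>x i \<le> S\<close> \<open>S > 0\<close> assms(3) by (intro powr_le_one_le) auto
      qed simp
    qed simp
    also have "\<dots> = S powr p"
      using \<open>S > 0\<close> by (simp add: S_def flip: sum_divide_distrib)
    finally show ?thesis by (simp add: S_def)
  qed
qed

lemma powr_le_tangent_line:
  fixes x p :: real
  assumes "x \<ge> 0" "0 \<le> p" "p \<le> 1"
  shows "x powr p \<le> p * x + (1 - p)"
proof (cases "x = 0")
  case False
  with assms show ?thesis
    using Youngs_inequality_0[of p "1 - p" x 1] by simp
qed (use assms in simp)

lemma sum_powr_le_card_powr_sum:
  fixes x :: "'i \<Rightarrow> real"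
  assumes "finite A" "\<And>i. i \<in> A \<Longrightarrow> x i \<ge> 0" "0 < p" "p \<le> 1"
  shows "(\<Sum>i\<in>A. x i powr p) \<le> real (card A) powr (1 - p) * (\<Sum>i\<in>A. x i) powr p"
proof -
  define S where "S = (\<Sum>i\<in>A. x i)"
  define n where "n = real (card A)"
  show ?thesis
  proof (cases "S = 0")
    case True
    then have "x i = 0" if "i \<in> A" for i
      using assms(1,2) that by (simp add: S_def sum_nonneg_eq_0_iff)
    then show ?thesis by simp
  next
    case False
    then have "S > 0" using assms(2) by (simp add: S_def order_less_le sum_nonneg)
    have "A \<noteq> {}" using False by (auto simp: S_def)
    then have "n > 0" using assms(1) by (simp add: n_def card_gt_0_iff)
    with \<open>S > 0\<close> have "n / S > 0" by simp
    have tangent: "(x i * (n / S)) powr p \<le> p * (n / S) * x i + (1 - p)" if "i \<in> A" for i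
    proof -
      have "x i * (n / S) \<ge> 0"
        using \<open>n / S > 0\<close> by (intro mult_nonneg_nonneg assms(2)[OF that] less_imp_le)
      from powr_le_tangent_line[OF this _ assms(4)] assms(3) show ?thesis by (simp add: ac_simps)
    qed
    have "(n / S) powr p * (\<Sum>i\<in>A. x i powr p) = (\<Sum>i\<in>A. (x i * (n / S)) powr p)"
      unfolding sum_distrib_left
    proof (intro sum.cong refl)
      fix i assume "i \<in> A"
      then show "(n / S) powr p * x i powr p = (x i * (n / S)) powr p"
        using assms(2) \<open>n / S > 0\<close> powr_mult[of "x i" "n / S" p] by simp
    qed
    also have "\<dots> \<le> (\<Sum>i\<in>A. p * (n / S) * x i + (1 - p))"
      using tangent by (rule sum_mono)
    also have "\<dots> = p * (n / S) * S + n * (1 - p)"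
      unfolding sum.distrib sum_distrib_left[symmetric] S_def[symmetric] by (simp add: n_def)
    also have "\<dots> = n"
      using \<open>S > 0\<close> by (simp add: algebra_simps)
    finally have A: "(n / S) powr p * (\<Sum>i\<in>A. x i powr p) \<le> n" .
    have P: "(n / S) powr p > 0"
      using \<open>n / S > 0\<close> by (simp only: powr_gt_zero)
    have "(\<Sum>i\<in>A. x i powr p) \<le> n / (n / S) powr p"
      unfolding pos_le_divide_eq[OF P] using A by (simp only: mult.commute)
    also have "\<dots> = n powr (1 - p) * S powr p"
      using \<open>n > 0\<close> \<open>S > 0\<close> by (simp add: powr_divide powr_diff)
    finally show ?thesis by (simp add: n_def S_def)
  qed
qed

lemma powr_eq_power2_powr_half:
  fixes x q :: real
  assumes "x \<ge> 0"
  shows "x powr q = (x\<^sup>2) powr (q / 2)"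
proof (cases "x = 0")
  case False
  then have "x\<^sup>2 = x powr 2" using assms by (simp add: powr_realpow)
  then show ?thesis by (simp add: powr_powr)
qed simp

lemma lq_norm_le_card_powr_l2_norm:
  fixes s :: "'i \<Rightarrow> real"
  assumes "finite A" "\<And>i. i \<in> A \<Longrightarrow> s i \<ge> 0" "q \<ge> 1"
  shows "(\<Sum>i\<in>A. s i powr q) powr (1/q)
           \<le> real (card A) powr (max 0 (1/q - 1/2)) * sqrt (\<Sum>i\<in>A. (s i)\<^sup>2)"
proof (cases "A = {}")
  case False
  define S where "S = (\<Sum>i\<in>A. (s i)\<^sup>2)"
  have S: "S \<ge> 0" by (simp add: S_def sum_nonneg)
  have sum_eq: "(\<Sum>i\<in>A. s i powr q) = (\<Sum>i\<in>A. ((s i)\<^sup>2) powr (q / 2))"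
    using assms(2) by (intro sum.cong refl powr_eq_power2_powr_half) auto
  show ?thesis
  proof (cases "q \<ge> 2")
    case True
    have "(\<Sum>i\<in>A. s i powr q) \<le> S powr (q / 2)"
      unfolding sum_eq S_def using assms(1) True by (intro sum_powr_le_powr_sum) auto
    then have "(\<Sum>i\<in>A. s i powr q) powr (1/q) \<le> (S powr (q / 2)) powr (1/q)"
      using assms(3) by (intro powr_mono2) (auto intro: sum_nonneg)
    also have "\<dots> = sqrt S"
      using assms(3) S by (simp add: powr_powr powr_half_sqrt)
    moreover have "max 0 (1/q - 1/2) = 0"
      using True by (simp add: field_simps)
    ultimately show ?thesis
      using False assms(1) by (simp add: S_def)
  next
    case False
    have "(\<Sum>i\<in>A. s i powr q) \<le> real (card A) powr (1 - q / 2) * S powr (q / 2)"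
      unfolding sum_eq S_def using assms(1,3) False by (intro sum_powr_le_card_powr_sum) auto
    then have "(\<Sum>i\<in>A. s i powr q) powr (1/q)
        \<le> (real (card A) powr (1 - q / 2) * S powr (q / 2)) powr (1/q)"
      using assms(3) by (intro powr_mono2) (auto intro: sum_nonneg)
    also have "\<dots> = real (card A) powr (1/q - 1/2) * sqrt S"
      using assms(3) S by (simp add: powr_mult powr_powr powr_half_sqrt field_simps)
    moreover have "max 0 (1/q - 1/2) = 1/q - 1/2"
      using False assms(3) by (simp add: field_simps)
    ultimately show ?thesis by (simp add: S_def)
  qed
qed simp

lemma schatten_norm_rank_one_sum_le:
  fixes a :: "'i \<Rightarrow> 'v::real_inner" and b :: "'i \<Rightarrow> 'w::real_inner"
  assumes "finite I" "q \<ge> 1"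
  shows "schatten_norm q (\<lambda>u. \<Sum>t\<in>I. rank_one (a t) (b t) u)
           \<le> real (card I) powr (max 0 (1/q - 1/2)) * sqrt (hs_norm_sq I a b)"
proof -
  let ?F = "\<lambda>u. \<Sum>t\<in>I. rank_one (a t) (b t) u"
  \<comment> \<open>\<open>schatten_norm\<close> evaluates some SVD of ?F; the bound holds for every one of them.\<close>
  have "\<exists>r. \<exists>n s e f. is_svd ?F n s e f \<and> r = (\<Sum>i<n. s i powr q) powr (1 / q)"
    using svd_exists_rank_one_sum[OF assms(1)] by blast
  from someI_ex[OF this] obtain n s e f where svd: "is_svd ?F n s e f"
    and val: "schatten_norm q ?F = (\<Sum>i<n. s i powr q) powr (1 / q)"
    unfolding schatten_norm_def by blast
  have "schatten_norm q ?F
      \<le> real (card {..<n}) powr (max 0 (1/q - 1/2)) * sqrt (\<Sum>i<n. (s i)\<^sup>2)"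
    unfolding val using svd assms(2)
    by (intro lq_norm_le_card_powr_l2_norm) (auto simp: is_svd_def less_imp_le)
  also have "\<dots> = real n powr (max 0 (1/q - 1/2)) * sqrt (\<Sum>i<n. (s i)\<^sup>2)"
    by simp
  also have "\<dots> \<le> real (card I) powr (max 0 (1/q - 1/2)) * sqrt (\<Sum>i<n. (s i)\<^sup>2)"
    using svd_length_le_card[OF svd assms(1)]
    by (intro mult_right_mono powr_mono2) (auto intro: sum_nonneg)
  finally show ?thesis
    by (simp add: sum_sq_singular_values[OF svd])
qed

section \<open>Sums over sign sequences\<close>

lemma finite_sign_seqs: "finite (sign_seqs T)"
proof -
  have "sign_seqs T = {xs. set xs \<subseteq> {-1, 1} \<and> length xs = T}"
    by (auto simp: sign_seqs_def)
  then show ?thesis using finite_lists_length_eq[of "{-1, 1 :: real}" T] by simp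
qed

lemma sign_seqs_nonempty: "sign_seqs T \<noteq> {}"
proof -
  have "replicate T 1 \<in> sign_seqs T" by (auto simp: sign_seqs_def)
  then show ?thesis by blast
qed

lemma sign_seqs_nth: "\<sigma> \<in> sign_seqs T \<Longrightarrow> k < T \<Longrightarrow> \<sigma> ! k \<in> {-1, 1}"
  unfolding sign_seqs_def by (auto dest: nth_mem)

lemma take_in_sign_seqs: "\<sigma> \<in> sign_seqs T \<Longrightarrow> k \<le> T \<Longrightarrow> take k \<sigma> \<in> sign_seqs k"
  unfolding sign_seqs_def by (auto dest: in_set_takeD)

lemma sum_sign_seqs_odd:
  assumes "k < T" and g: "\<And>\<sigma>. \<sigma> \<in> sign_seqs T \<Longrightarrow> g (\<sigma>[k := - \<sigma> ! k]) = g \<sigma>"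
  shows "(\<Sum>\<sigma>\<in>sign_seqs T. \<sigma> ! k * g \<sigma>) = 0"
proof -
  define flip where "flip \<sigma> = \<sigma>[k := - \<sigma> ! k]" for \<sigma> :: "real list"
  have len: "length \<sigma> = T" if "\<sigma> \<in> sign_seqs T" for \<sigma>
    using that by (simp add: sign_seqs_def)
  have flip_flip: "flip (flip \<sigma>) = \<sigma>" if "\<sigma> \<in> sign_seqs T" for \<sigma>
    using len[OF that] assms(1) by (simp add: flip_def)
  have flip_in: "flip \<sigma> \<in> sign_seqs T" if "\<sigma> \<in> sign_seqs T" for \<sigma>
    using that sign_seqs_nth[OF that assms(1)] set_update_subset_insert[of \<sigma> k "- \<sigma> ! k"]
    by (auto simp: sign_seqs_def flip_def)
  let ?h = "\<lambda>\<sigma>. \<sigma> ! k * g \<sigma>"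
  have "(\<Sum>\<sigma>\<in>sign_seqs T. ?h \<sigma>) = (\<Sum>\<sigma>\<in>sign_seqs T. ?h (flip \<sigma>))"
    by (rule sum.reindex_bij_witness[where i=flip and j=flip]) (auto simp: flip_flip flip_in)
  also have "\<dots> = - (\<Sum>\<sigma>\<in>sign_seqs T. ?h \<sigma>)"
    unfolding sum_negf[symmetric] using len assms(1) g
    by (intro sum.cong refl) (simp add: flip_def)
  finally show ?thesis by simp
qed

lemma sum_sign_seqs_cross:
  assumes "j < T" "k < T" "j \<noteq> k"
  shows "(\<Sum>\<sigma>\<in>sign_seqs T. \<sigma> ! j * \<sigma> ! k * G (take j \<sigma>) (take k \<sigma>)) = 0"
proof -
  have less: "(\<Sum>\<sigma>\<in>sign_seqs T. \<sigma> ! j * \<sigma> ! k * G (take j \<sigma>) (take k \<sigma>)) = 0"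
    if "j < k" "k < T" for j k G
  proof -
    have "(\<Sum>\<sigma>\<in>sign_seqs T. \<sigma> ! k * (\<sigma> ! j * G (take j \<sigma>) (take k \<sigma>))) = 0"
      using that by (intro sum_sign_seqs_odd) (simp_all add: take_update_cancel)
    then show ?thesis by (simp add: ac_simps)
  qed
  show ?thesis
  proof (cases "j < k")
    case False
    then have "(\<Sum>\<sigma>\<in>sign_seqs T. \<sigma> ! k * \<sigma> ! j * (\<lambda>x y. G y x) (take k \<sigma>) (take j \<sigma>)) = 0"
      using assms by (intro less) auto
    then show ?thesis by (simp add: ac_simps)
  qed (use assms less in blast)
qed

lemma sum_hs_norm_sq_sign_seqs_le:
  fixes v :: "nat \<Rightarrow> real list \<Rightarrow> 'v::real_inner" and w :: "nat \<Rightarrow> real list \<Rightarrow> 'w::real_inner"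
    and c1 c2 :: real
  assumes bv: "\<And>t s. t \<in> {1..T} \<Longrightarrow> s \<in> sign_seqs (t - 1) \<Longrightarrow> norm (v t s) \<le> c1"
    and bw: "\<And>t s. t \<in> {1..T} \<Longrightarrow> s \<in> sign_seqs (t - 1) \<Longrightarrow> norm (w t s) \<le> c2"
  shows "(\<Sum>\<sigma>\<in>sign_seqs T. hs_norm_sq {1..T} (\<lambda>t. \<sigma> ! (t - 1) *\<^sub>R v t (take (t - 1) \<sigma>))
                                            (\<lambda>t. w t (take (t - 1) \<sigma>)))
         \<le> real (card (sign_seqs T)) * (real T * (c1 * c2)\<^sup>2)"
proof -
  define X where "X t t' \<sigma> = \<sigma> ! (t - 1) * \<sigma> ! (t' - 1) *
      (inner (v t (take (t - 1) \<sigma>)) (v t' (take (t' - 1) \<sigma>))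
       * inner (w t (take (t - 1) \<sigma>)) (w t' (take (t' - 1) \<sigma>)))" for t t' \<sigma>
  \<comment> \<open>the later of the two signs \<sigma>_t, \<sigma>_t' does not occur in the rest of the term\<close>
  have off_diagonal: "(\<Sum>\<sigma>\<in>sign_seqs T. X t t' \<sigma>) = 0"
    if "t \<in> {1..T}" "t' \<in> {1..T}" "t \<noteq> t'" for t t'
    using sum_sign_seqs_cross[of "t - 1" T "t' - 1"
        "\<lambda>l l'. inner (v t l) (v t' l') * inner (w t l) (w t' l')"] that
    by (auto simp: X_def)
  have diagonal: "X t t \<sigma> \<le> (c1 * c2)\<^sup>2" if "t \<in> {1..T}" "\<sigma> \<in> sign_seqs T" for t \<sigma>
  proof -
    have prefix: "take (t - 1) \<sigma> \<in> sign_seqs (t - 1)"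
      using that(1) by (intro take_in_sign_seqs[OF that(2)]) auto
    have "t - 1 < T" using that(1) by auto
    then have "\<sigma> ! (t - 1) \<in> {-1, 1}" by (rule sign_seqs_nth[OF that(2)])
    then have "\<sigma> ! (t - 1) * \<sigma> ! (t - 1) = 1" by auto
    then have "X t t \<sigma> = (norm (v t (take (t - 1) \<sigma>)))\<^sup>2 * (norm (w t (take (t - 1) \<sigma>)))\<^sup>2"
      by (simp add: X_def power2_norm_eq_inner)
    also have "\<dots> \<le> c1\<^sup>2 * c2\<^sup>2"
      using bv[OF that(1) prefix] bw[OF that(1) prefix] by (intro mult_mono power_mono) auto
    finally show ?thesis by (simp add: power_mult_distrib)
  qed
  have "(\<Sum>\<sigma>\<in>sign_seqs T. hs_norm_sq {1..T} (\<lambda>t. \<sigma> ! (t - 1) *\<^sub>R v t (take (t - 1) \<sigma>))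
                                          (\<lambda>t. w t (take (t - 1) \<sigma>)))
      = (\<Sum>t\<in>{1..T}. \<Sum>t'\<in>{1..T}. \<Sum>\<sigma>\<in>sign_seqs T. X t t' \<sigma>)"
    unfolding hs_norm_sq_def X_def
    by (subst sum.swap) (simp add: sum.swap[of _ "sign_seqs T"] algebra_simps)
  also have "\<dots> = (\<Sum>t\<in>{1..T}. \<Sum>\<sigma>\<in>sign_seqs T. X t t \<sigma>)"
  proof (intro sum.cong refl)
    fix t assume t: "t \<in> {1..T}"
    have "(\<Sum>t'\<in>{1..T}. \<Sum>\<sigma>\<in>sign_seqs T. X t t' \<sigma>)
        = (\<Sum>\<sigma>\<in>sign_seqs T. X t t \<sigma>) + (\<Sum>t'\<in>{1..T} - {t}. \<Sum>\<sigma>\<in>sign_seqs T. X t t' \<sigma>)"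
      using t by (simp add: sum.remove)
    also have "(\<Sum>t'\<in>{1..T} - {t}. \<Sum>\<sigma>\<in>sign_seqs T. X t t' \<sigma>) = 0"
      using off_diagonal t by (intro sum.neutral) auto
    finally show "(\<Sum>t'\<in>{1..T}. \<Sum>\<sigma>\<in>sign_seqs T. X t t' \<sigma>) = (\<Sum>\<sigma>\<in>sign_seqs T. X t t \<sigma>)"
      by simp
  qed
  also have "\<dots> \<le> (\<Sum>t\<in>{1..T}. \<Sum>\<sigma>\<in>sign_seqs T. (c1 * c2)\<^sup>2)"
    using diagonal by (intro sum_mono) auto
  finally show ?thesis by (simp add: ac_simps)
qed

lemma sum_sqrt_le_card_mult_sqrt:
  fixes f :: "'i \<Rightarrow> real"
  assumes "\<And>i. i \<in> A \<Longrightarrow> f i \<ge> 0" "(\<Sum>i\<in>A. f i) \<le> real (card A) * M"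
  shows "(\<Sum>i\<in>A. sqrt (f i)) \<le> real (card A) * sqrt M"
proof -
  have "(\<Sum>i\<in>A. sqrt (f i)) \<le> sqrt (real (card A) * (\<Sum>i\<in>A. f i))"
  proof (rule real_le_rsqrt)
    have "(\<Sum>i\<in>A. 1 * sqrt (f i))\<^sup>2 \<le> (\<Sum>i\<in>A. 1\<^sup>2) * (\<Sum>i\<in>A. (sqrt (f i))\<^sup>2)"
      by (rule Cauchy_Schwarz_ineq_sum)
    then show "(\<Sum>i\<in>A. sqrt (f i))\<^sup>2 \<le> real (card A) * (\<Sum>i\<in>A. f i)"
      using assms(1) by simp
  qed
  also have "\<dots> \<le> sqrt (real (card A) * (real (card A) * M))"
    using assms(2) by (intro real_sqrt_le_mono mult_left_mono) simp_all
  also have "\<dots> = real (card A) * sqrt M"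
    by (simp add: real_sqrt_mult flip: mult.assoc)
  finally show ?thesis .
qed

theorem lemma2:
  fixes v :: "nat \<Rightarrow> real list \<Rightarrow> 'v::{real_inner, complete_space}"
    and w :: "nat \<Rightarrow> real list \<Rightarrow> 'w::{real_inner, complete_space}"
    and c1 c2 q :: real and T :: nat
  assumes sepV: "\<exists>D::'v set. countable D \<and> closure D = UNIV"
    and sepW: "\<exists>D::'w set. countable D \<and> closure D = UNIV"
    and c1: "c1 > 0" and c2: "c2 > 0"
    and bv: "\<And>t s. t \<in> {1..T} \<Longrightarrow> s \<in> sign_seqs (t - 1) \<Longrightarrow> norm (v t s) \<le> c1"
    and bw: "\<And>t s. t \<in> {1..T} \<Longrightarrow> s \<in> sign_seqs (t - 1) \<Longrightarrow> norm (w t s) \<le> c2"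
    and q: "q \<ge> 1"
  shows "measure_pmf.expectation (pmf_of_set (sign_seqs T))
           (\<lambda>\<sigma>. schatten_norm q
              (\<lambda>u. \<Sum>t=1..T. (\<sigma> ! (t - 1)) *\<^sub>R
                   rank_one (v t (take (t - 1) \<sigma>)) (w t (take (t - 1) \<sigma>)) u))
         \<le> c1 * c2 * real T powr (max (1/2) (1/q))"
proof -
  define a where "a \<sigma> = (\<lambda>t. \<sigma> ! (t - 1) *\<^sub>R v t (take (t - 1) \<sigma>))" for \<sigma>
  define b where "b \<sigma> = (\<lambda>t. w t (take (t - 1) \<sigma>))" for \<sigma>
  define HS where "HS \<sigma> = hs_norm_sq {1..T} (a \<sigma>) (b \<sigma>)" for \<sigma>
  define N where "N = real (card (sign_seqs T))"
  define \<alpha> where "\<alpha> = max 0 (1/q - 1/2)"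
  let ?P = "\<lambda>\<sigma>. schatten_norm q (\<lambda>u. \<Sum>t=1..T. (\<sigma> ! (t - 1)) *\<^sub>R
                   rank_one (v t (take (t - 1) \<sigma>)) (w t (take (t - 1) \<sigma>)) u)"
  have "N > 0" using finite_sign_seqs sign_seqs_nonempty by (simp add: N_def card_gt_0_iff)
  have schatten: "?P \<sigma> \<le> real T powr \<alpha> * sqrt (HS \<sigma>)" for \<sigma>
    using schatten_norm_rank_one_sum_le[where I="{1..T}" and a="a \<sigma>" and b="b \<sigma>"] q
    by (simp add: HS_def \<alpha>_def a_def b_def rank_one_def mult.commute)
  have sqrt_sum: "(\<Sum>\<sigma>\<in>sign_seqs T. sqrt (HS \<sigma>)) \<le> N * sqrt (T * (c1 * c2)\<^sup>2)"
    unfolding N_def using sum_hs_norm_sq_sign_seqs_le[where v=v and w=w and T=T, OF bv bw]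
    by (intro sum_sqrt_le_card_mult_sqrt) (auto simp: HS_def a_def b_def hs_norm_sq_nonneg)
  have "(\<Sum>\<sigma>\<in>sign_seqs T. ?P \<sigma>) \<le> real T powr \<alpha> * (\<Sum>\<sigma>\<in>sign_seqs T. sqrt (HS \<sigma>))"
    using schatten by (simp add: sum_distrib_left sum_mono)
  also have "\<dots> \<le> real T powr \<alpha> * (N * sqrt (T * (c1 * c2)\<^sup>2))"
    using sqrt_sum by (rule mult_left_mono) simp
  also have "real T powr \<alpha> * (N * sqrt (T * (c1 * c2)\<^sup>2))
      = N * (c1 * c2 * (real T powr \<alpha> * real T powr (1/2)))"
    using c1 c2 by (simp add: real_sqrt_mult powr_half_sqrt ac_simps)
  also have "real T powr \<alpha> * real T powr (1/2) = real T powr (max (1/2) (1/q))"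
    by (simp add: \<alpha>_def max_def flip: powr_add)
  finally show ?thesis
    using \<open>N > 0\<close>
    by (simp add: integral_pmf_of_set[OF sign_seqs_nonempty finite_sign_seqs] N_def
        pos_divide_le_eq ac_simps)
qed

end
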